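(* Let $P,Q$ be plane posets with the same number $n$ of elements, and let $\theta_{P,Q}:P\to Q$ be the unique bijection which is increasing for the total orders $\leq$ of $P$ and $Q$. The following assertions are equivalent: (1) for all $x,y\in P$, if $\theta_{P,Q}(x)\leq_h\theta_{P,Q}(y)$ in $Q$ then $x\leq_h y$ in $P$; (2) for all $x,y\in P$, if $x\leq_r y$ in $P$ then $\theta_{P,Q}(x)\leq_r\theta_{P,Q}(y)$ in $Q$.
   Context: A plane poset is a finite set $P$ with two partial orders $\leq_h$ and $\leq_r$ such that for all $x\neq y$ in $P$, $x$ and $y$ are comparable for $\leq_h$ if and only if they are not comparable for $\leq_r$. It is known that on any plane poset the relation $x\leq y$ iff ($x\leq_h y$ or $x\leq_r y$) is a total order. *)

theory Defs
  imports Main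
begin

definition plane_poset :: "'a set \<Rightarrow> 'a rel \<Rightarrow> 'a rel \<Rightarrow> bool" where
  "plane_poset P H R \<longleftrightarrow>
     finite P \<and> partial_order_on P H \<and> partial_order_on P R \<and>
     (\<forall>x\<in>P. \<forall>y\<in>P. x \<noteq> y \<longrightarrow>
        (((x, y) \<in> H \<or> (y, x) \<in> H) \<longleftrightarrow> \<not> ((x, y) \<in> R \<or> (y, x) \<in> R)))"

definition plane_le :: "'a rel \<Rightarrow> 'a rel \<Rightarrow> 'a rel" where
  "plane_le H R = H \<union> R"

end

theory Submission
  imports Defs
begin

(* In a plane poset two distinct elements are comparable for exactly one of the two
   orders. Hence if \<theta> is increasing for the total orders, a strict relation x <_r y is
   sent either to an r-relation or to an h-relation, and reflecting h rules out the latter.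
   Conversely, if \<theta> preserves r and \<theta> x <_h \<theta> y, then x and y cannot be r-comparable,
   so they are h-comparable, and y <_h x is excluded because \<theta> would send it to
   \<theta> y <_h \<theta> x. *)

lemma plane_poset_orders:
  assumes "plane_poset P H R"
  shows "partial_order_on P H" "partial_order_on P R"
  using assms unfolding plane_poset_def by auto

lemma plane_poset_comparable:
  assumes "plane_poset P H R" "x \<in> P" "y \<in> P"
  shows "(x, y) \<in> H \<or> (y, x) \<in> H \<or> (x, y) \<in> R \<or> (y, x) \<in> R"
proof (cases "x = y")
  case True
  with plane_poset_orders(1)[OF assms(1)] assms(2) show ?thesis
    by (auto simp: partial_order_on_def preorder_on_def refl_on_def)
next
  case False
  with assms show ?thesis unfolding plane_poset_def by blast
qed

lemma plane_poset_H_R_eq: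
  assumes "plane_poset P H R" "(x, y) \<in> H" "(x, y) \<in> R \<or> (y, x) \<in> R"
  shows "x = y"
proof -
  have "x \<in> P" "y \<in> P"
    using plane_poset_orders(1)[OF assms(1)] assms(2)
    by (auto simp: partial_order_on_def preorder_on_def refl_on_def)
  with assms show ?thesis unfolding plane_poset_def by blast
qed

lemma plane_mono_reflecting_H_preserves_R:
  assumes "plane_poset P HP RP" "plane_poset Q HQ RQ" "\<theta> ` P \<subseteq> Q"
    and mono: "\<forall>x\<in>P. \<forall>y\<in>P. (x, y) \<in> plane_le HP RP \<longrightarrow> (\<theta> x, \<theta> y) \<in> plane_le HQ RQ"
    and reflect_H: "\<forall>x\<in>P. \<forall>y\<in>P. (\<theta> x, \<theta> y) \<in> HQ \<longrightarrow> (x, y) \<in> HP"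
    and "x \<in> P" "y \<in> P" "(x, y) \<in> RP"
  shows "(\<theta> x, \<theta> y) \<in> RQ"
proof (cases "x = y")
  case True
  with plane_poset_orders(2)[OF assms(2)] assms(3,6) show ?thesis
    by (auto simp: partial_order_on_def preorder_on_def refl_on_def)
next
  case False
  have "(\<theta> x, \<theta> y) \<notin> HQ"
  proof
    assume "(\<theta> x, \<theta> y) \<in> HQ"
    with reflect_H assms(6,7) have "(x, y) \<in> HP" by blast
    with plane_poset_H_R_eq[OF assms(1)] \<open>(x, y) \<in> RP\<close> False show False by blast
  qed
  with mono assms(6-8) show ?thesis unfolding plane_le_def by blast
qed

lemma plane_mono_preserving_R_reflects_H:
  assumes "plane_poset P HP RP" "plane_poset Q HQ RQ" "inj_on \<theta> P"
    and mono: "\<forall>x\<in>P. \<forall>y\<in>P. (x, y) \<in> plane_le HP RP \<longrightarrow> (\<theta> x, \<theta> y) \<in> plane_le HQ RQ"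
    and preserve_R: "\<forall>x\<in>P. \<forall>y\<in>P. (x, y) \<in> RP \<longrightarrow> (\<theta> x, \<theta> y) \<in> RQ"
    and "x \<in> P" "y \<in> P" "(\<theta> x, \<theta> y) \<in> HQ"
  shows "(x, y) \<in> HP"
proof (cases "x = y")
  case True
  with plane_poset_orders(1)[OF assms(1)] assms(6) show ?thesis
    by (auto simp: partial_order_on_def preorder_on_def refl_on_def)
next
  case False
  have ne: "\<theta> x \<noteq> \<theta> y"
    using False assms(3,6,7) by (auto simp: inj_on_def)
  have not_R: "(\<theta> x, \<theta> y) \<notin> RQ" "(\<theta> y, \<theta> x) \<notin> RQ"
    using plane_poset_H_R_eq[OF assms(2) assms(8)] ne by auto
  have "(y, x) \<notin> HP"
  proof
    assume "(y, x) \<in> HP"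
    with mono assms(6,7) not_R have "(\<theta> y, \<theta> x) \<in> HQ" unfolding plane_le_def by blast
    with assms(8) ne plane_poset_orders(1)[OF assms(2)] show False
      by (auto simp: partial_order_on_def antisym_def)
  qed
  moreover have "(x, y) \<notin> RP" "(y, x) \<notin> RP"
    using preserve_R assms(6,7) not_R by blast+
  ultimately show ?thesis
    using plane_poset_comparable[OF assms(1,6,7)] by blast
qed

theorem lemma9:
  fixes P :: "'a set" and HP RP :: "'a rel"
    and Q :: "'b set" and HQ RQ :: "'b rel"
    and \<theta> :: "'a \<Rightarrow> 'b"
  assumes "plane_poset P HP RP"
    and "plane_poset Q HQ RQ"
    and "card P = card Q"
    and "bij_betw \<theta> P Q"
    and "\<forall>x\<in>P. \<forall>y\<in>P. (x, y) \<in> plane_le HP RP \<longrightarrow> (\<theta> x, \<theta> y) \<in> plane_le HQ RQ"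
  shows "(\<forall>x\<in>P. \<forall>y\<in>P. (\<theta> x, \<theta> y) \<in> HQ \<longrightarrow> (x, y) \<in> HP)
     \<longleftrightarrow> (\<forall>x\<in>P. \<forall>y\<in>P. (x, y) \<in> RP \<longrightarrow> (\<theta> x, \<theta> y) \<in> RQ)"
proof -
  \<comment> \<open>card P = card Q is implied by the bijection and not needed.\<close>
  have "inj_on \<theta> P" "\<theta> ` P \<subseteq> Q"
    using assms(4) by (auto simp: bij_betw_def)
  then show ?thesis
    using plane_mono_reflecting_H_preserves_R[OF assms(1,2) _ assms(5)]
      plane_mono_preserving_R_reflects_H[OF assms(1,2) _ assms(5)]
    by blast
qed

end
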